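(* Let $S$ be a completely simple semigroup which is the union $S=S_1\cup S_2$ of two left simple subsemigroups $S_1,S_2$. Then either $S$ is left simple, or the union is disjoint and $S_1$ and $S_2$ are the minimal left ideals of $S$.
   Context: A semigroup is completely simple if it has no zero element, has no proper two-sided ideal, and contains an idempotent that is minimal for the order $p\le q\iff p=pq=qp$ on idempotents. A semigroup is left simple if it has no proper left ideal (a left ideal of $S$ being a non-empty $I\subset S$ with $SI\subset I$). *)

theory Defs
  imports Main
begin

(* Semigroups are modelled as subsets of an ambient type of class semigroup_mult
   that are closed under the (associative) multiplication. *)

definition subsemigroup :: "'a::semigroup_mult set \<Rightarrow> 'a set \<Rightarrow> bool" where
  "subsemigroup T S \<longleftrightarrow> T \<subseteq> S \<and> (\<forall>x\<in>T. \<forall>y\<in>T. x * y \<in> T)"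

definition left_ideal :: "'a::semigroup_mult set \<Rightarrow> 'a set \<Rightarrow> bool" where
  "left_ideal I S \<longleftrightarrow> I \<noteq> {} \<and> I \<subseteq> S \<and> (\<forall>s\<in>S. \<forall>x\<in>I. s * x \<in> I)"

definition two_sided_ideal :: "'a::semigroup_mult set \<Rightarrow> 'a set \<Rightarrow> bool" where
  "two_sided_ideal I S \<longleftrightarrow> I \<noteq> {} \<and> I \<subseteq> S \<and>
     (\<forall>s\<in>S. \<forall>x\<in>I. s * x \<in> I \<and> x * s \<in> I)"

definition left_simple :: "'a::semigroup_mult set \<Rightarrow> bool" where
  "left_simple S \<longleftrightarrow> (\<forall>I. left_ideal I S \<longrightarrow> I = S)"

definition has_zero :: "'a::semigroup_mult set \<Rightarrow> bool" where
  "has_zero S \<longleftrightarrow> (\<exists>z\<in>S. \<forall>x\<in>S. z * x = z \<and> x * z = z)"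

definition idempotents :: "'a::semigroup_mult set \<Rightarrow> 'a set" where
  "idempotents S = {e\<in>S. e * e = e}"

definition idem_le :: "'a::semigroup_mult \<Rightarrow> 'a \<Rightarrow> bool" where
  "idem_le p q \<longleftrightarrow> p = p * q \<and> p = q * p"

definition completely_simple :: "'a::semigroup_mult set \<Rightarrow> bool" where
  "completely_simple S \<longleftrightarrow>
     (\<forall>x\<in>S. \<forall>y\<in>S. x * y \<in> S) \<and>
     \<not> has_zero S \<and>
     (\<forall>I. two_sided_ideal I S \<longrightarrow> I = S) \<and>
     (\<exists>e\<in>idempotents S. \<forall>f\<in>idempotents S. idem_le f e \<longrightarrow> f = e)"

definition minimal_left_ideal :: "'a::semigroup_mult set \<Rightarrow> 'a set \<Rightarrow> bool" where
  "minimal_left_ideal L S \<longleftrightarrow> left_ideal L S \<and> (\<forall>J. left_ideal J S \<longrightarrow> J \<subseteq> L \<longrightarrow> J = L)"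

end

theory Submission
  imports Defs
begin

text \<open>Each left simple \<open>S\<^sub>i\<close> lies inside every
  left ideal of \<open>S\<close> it meets, so a proper left ideal of \<open>S\<close> must be one of \<open>S\<^sub>1\<close>,
  \<open>S\<^sub>2\<close>, say \<open>S\<^sub>1\<close>. As \<open>S\<close> is simple, \<open>S\<^sub>1\<close> is not a right ideal, so \<open>S\<^sub>1 s\<close> is not
  contained in \<open>S\<^sub>1\<close> for some \<open>s\<close>; by left simplicity of \<open>S\<^sub>1\<close> the left ideal \<open>S\<^sub>1 s\<close>
  is then disjoint from \<open>S\<^sub>1\<close>, hence equal to \<open>S\<^sub>2\<close>. So \<open>S\<^sub>1\<close> and \<open>S\<^sub>2\<close> are disjoint
  left ideals, and every left ideal contains one of them.\<close>

definition simple_semigroup :: "'a::semigroup_mult set \<Rightarrow> bool" where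
  "simple_semigroup S \<longleftrightarrow>
     (\<forall>x\<in>S. \<forall>y\<in>S. x * y \<in> S) \<and> (\<forall>I. two_sided_ideal I S \<longrightarrow> I = S)"

lemma completely_simple_imp_simple_semigroup:
  "completely_simple S \<Longrightarrow> simple_semigroup S"
  unfolding completely_simple_def simple_semigroup_def by blast

lemma left_ideal_imp_subsemigroup: "left_ideal L S \<Longrightarrow> subsemigroup L S"
  unfolding left_ideal_def subsemigroup_def by blast

lemma left_simple_subset_left_ideal:
  assumes "left_simple T" "subsemigroup T S" "left_ideal L S" "a \<in> L" "a \<in> T"
  shows "T \<subseteq> L"
proof
  fix t assume "t \<in> T"
  have "left_ideal ((\<lambda>x. x * a) ` T) T"
    using assms(2,5) unfolding left_ideal_def subsemigroup_def
    by (auto simp: mult.assoc[symmetric])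
  with assms(1) have "(\<lambda>x. x * a) ` T = T" unfolding left_simple_def by blast
  with \<open>t \<in> T\<close> obtain x where "x \<in> T" "t = x * a" by blast
  with assms(2-4) show "t \<in> L" unfolding left_ideal_def subsemigroup_def by blast
qed

lemma left_ideal_right_translate:
  assumes closed: "\<forall>x\<in>S. \<forall>y\<in>S. x * y \<in> S" and L: "left_ideal L S" and "s \<in> S"
  shows "left_ideal ((\<lambda>z. z * s) ` L) S"
  unfolding left_ideal_def
proof (intro conjI ballI)
  show "(\<lambda>z. z * s) ` L \<noteq> {}" "(\<lambda>z. z * s) ` L \<subseteq> S"
    using L closed \<open>s \<in> S\<close> unfolding left_ideal_def by blast+
next
  fix t w assume "t \<in> S" "w \<in> (\<lambda>z. z * s) ` L"
  then obtain z where "z \<in> L" "t * w = (t * z) * s" by (auto simp: mult.assoc)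
  moreover have "t * z \<in> L" using L \<open>t \<in> S\<close> \<open>z \<in> L\<close> unfolding left_ideal_def by blast
  ultimately show "t * w \<in> (\<lambda>z. z * s) ` L" by simp
qed

lemma left_simple_right_translate_subset_or_disjoint:
  assumes "left_simple L" "left_ideal L S"
  shows "(\<lambda>z. z * s) ` L \<subseteq> L \<or> (\<lambda>z. z * s) ` L \<inter> L = {}"
proof (rule ccontr)
  assume "\<not> ?thesis"
  then obtain z0 where z0: "z0 \<in> L" "z0 * s \<in> L" and out: "\<not> (\<lambda>z. z * s) ` L \<subseteq> L"
    by blast
  let ?K = "{z \<in> L. z * s \<in> L}"
  have "left_ideal ?K S"
    using assms(2) z0 unfolding left_ideal_def by (auto simp: mult.assoc)
  then have "L \<subseteq> ?K"
    using left_simple_subset_left_ideal[OF assms(1) left_ideal_imp_subsemigroup[OF assms(2)]] z0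
    by blast
  with out show False by blast
qed

lemma simple_semigroup_proper_left_ideal_not_right_closed:
  assumes "simple_semigroup S" "left_ideal L S" "L \<noteq> S"
  obtains s z where "s \<in> S" "z \<in> L" "z * s \<notin> L"
proof -
  have "\<not> two_sided_ideal L S"
    using assms unfolding simple_semigroup_def by blast
  with assms(2) show ?thesis
    using that unfolding two_sided_ideal_def left_ideal_def by blast
qed

context
  fixes S S1 S2 :: "'a::semigroup_mult set"
  assumes union: "S = S1 \<union> S2"
    and sub1: "subsemigroup S1 S" and sub2: "subsemigroup S2 S"
    and simple1: "left_simple S1" and simple2: "left_simple S2"
begin

lemma left_ideal_contains_component:
  assumes "left_ideal J S"
  shows "S1 \<subseteq> J \<or> S2 \<subseteq> J"
proof -
  from assms obtain b where "b \<in> J" "b \<in> S1 \<or> b \<in> S2"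
    using union unfolding left_ideal_def by blast
  then show ?thesis
    using left_simple_subset_left_ideal[OF simple1 sub1 assms]
      left_simple_subset_left_ideal[OF simple2 sub2 assms] by blast
qed

lemma proper_left_ideal_eq_component:
  assumes L: "left_ideal L S" and proper: "L \<noteq> S"
  shows "L = S1 \<or> L = S2"
proof -
  have L_sub: "L \<subseteq> S1 \<union> S2" using L union unfolding left_ideal_def by blast
  consider "S1 \<subseteq> L" | "S2 \<subseteq> L" using left_ideal_contains_component[OF L] by blast
  then show ?thesis
  proof cases
    case 1
    then have "L \<inter> S2 = {}"
      using left_simple_subset_left_ideal[OF simple2 sub2 L] L_sub proper union by blast
    with 1 L_sub show ?thesis by blast
  next
    case 2
    then have "L \<inter> S1 = {}"
      using left_simple_subset_left_ideal[OF simple1 sub1 L] L_sub proper union by blast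
    with 2 L_sub show ?thesis by blast
  qed
qed

lemma complement_of_proper_left_ideal_component:
  assumes simple: "simple_semigroup S" and ideal1: "left_ideal S1 S" and proper: "S1 \<noteq> S"
  shows "left_ideal S2 S \<and> S1 \<inter> S2 = {}"
proof -
  obtain s z where s: "s \<in> S" "z \<in> S1" "z * s \<notin> S1"
    using simple_semigroup_proper_left_ideal_not_right_closed[OF simple ideal1 proper] .
  let ?M = "(\<lambda>z. z * s) ` S1"
  have M_ideal: "left_ideal ?M S"
    using left_ideal_right_translate[OF _ ideal1 s(1)] simple
    unfolding simple_semigroup_def by blast
  have M_disjoint: "?M \<inter> S1 = {}"
    using left_simple_right_translate_subset_or_disjoint[OF simple1 ideal1, of s] s(2,3) by blast
  have "?M \<subseteq> S2"
    using M_ideal M_disjoint union unfolding left_ideal_def by blast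
  moreover have "S2 \<subseteq> ?M"
    using left_ideal_contains_component[OF M_ideal] M_disjoint s(2) by blast
  ultimately have "?M = S2" by blast
  with M_ideal M_disjoint show ?thesis by auto
qed

lemma minimal_left_ideals_eq_components:
  assumes ideal1: "left_ideal S1 S" and ideal2: "left_ideal S2 S" and disjoint: "S1 \<inter> S2 = {}"
  shows "{L. minimal_left_ideal L S} = {S1, S2}"
proof -
  have nonempty: "S1 \<noteq> {}" "S2 \<noteq> {}"
    using ideal1 ideal2 unfolding left_ideal_def by blast+
  have "J = S1" if "left_ideal J S" "J \<subseteq> S1" for J
    using left_ideal_contains_component[OF that(1)] that(2) disjoint nonempty(2) by blast
  moreover have "J = S2" if "left_ideal J S" "J \<subseteq> S2" for J
    using left_ideal_contains_component[OF that(1)] that(2) disjoint nonempty(1) by blast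
  ultimately have "minimal_left_ideal S1 S" "minimal_left_ideal S2 S"
    unfolding minimal_left_ideal_def using ideal1 ideal2 by blast+
  moreover have "J = S1 \<or> J = S2" if "minimal_left_ideal J S" for J
    using that left_ideal_contains_component ideal1 ideal2
    unfolding minimal_left_ideal_def by metis
  ultimately show ?thesis by blast
qed

end

theorem simple_semigroup_union_left_simple:
  fixes S S1 S2 :: "'a::semigroup_mult set"
  assumes simple: "simple_semigroup S" and union: "S = S1 \<union> S2"
    and sub1: "subsemigroup S1 S" and sub2: "subsemigroup S2 S"
    and simple1: "left_simple S1" and simple2: "left_simple S2"
  shows "left_simple S \<or> (S1 \<inter> S2 = {} \<and> {L. minimal_left_ideal L S} = {S1, S2})"
proof (cases "left_simple S")
  case False
  then obtain L where L: "left_ideal L S" "L \<noteq> S" unfolding left_simple_def by blast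
  have "left_ideal S1 S \<and> left_ideal S2 S \<and> S1 \<inter> S2 = {}"
    using proper_left_ideal_eq_component[OF union sub1 sub2 simple1 simple2 L]
  proof
    assume "L = S1"
    then show ?thesis
      using complement_of_proper_left_ideal_component[OF union sub1 sub2 simple1 simple2 simple] L
      by auto
  next
    assume "L = S2"
    have "S = S2 \<union> S1" using union by blast
    with \<open>L = S2\<close> show ?thesis
      using complement_of_proper_left_ideal_component[OF _ sub2 sub1 simple2 simple1 simple] L
      by blast
  qed
  then show ?thesis
    using minimal_left_ideals_eq_components[OF union sub1 sub2 simple1 simple2] by blast
qed simp

theorem lemma2p10:
  fixes S S1 S2 :: "'a::semigroup_mult set"
  assumes "completely_simple S"
    and "S = S1 \<union> S2"
    and "subsemigroup S1 S" and "subsemigroup S2 S"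
    and "left_simple S1" and "left_simple S2"
  shows "left_simple S \<or>
         (S1 \<inter> S2 = {} \<and> {L. minimal_left_ideal L S} = {S1, S2})"
  using simple_semigroup_union_left_simple[OF completely_simple_imp_simple_semigroup[OF assms(1)]
      assms(2-6)] .

end
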